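(* Let $\mu$ be a distribution over $X\times\mathbb{R}$, let $f_1:X\to\mathbb{R}$ and $b:X\to[-1,1]\cup\{*\}$. Assume \[ \mathbb{E}_{(x,y)\sim\mu}[(y-f_1(x))\diamondsuit b(x)]\le\alpha\quad\text{and}\quad\mathbb{E}_{(x,y)\sim\mu}[(f_1(x)-y)\,\mathrm{sign}(f_1(x))]\le\varepsilon. \] Then $\mathbb{E}_{(x,y)\sim\mu}[y\,\mathrm{sign}(f_1(x))]\ge\mathbb{E}_{(x,y)\sim\mu}[y\diamondsuit b(x)]-\alpha-\varepsilon$.
   Context: Distributions are discrete (countable support). For $u_1\in\mathbb{R}$, $u_2\in[-1,1]\cup\{*\}$, the generalized product is $u_1\diamondsuit u_2=u_1u_2$ if $u_2\in[-1,1]$ and $-|u_1|$ if $u_2=*$. $\mathrm{sign}(u)=1$ if $u\ge0$ and $-1$ if $u<0$. *)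

theory Defs
  imports "HOL-Probability.Probability"
begin

text \<open>Generalized product: the value None plays the role of the symbol star.\<close>
definition gprod :: "real \<Rightarrow> real option \<Rightarrow> real" where
  "gprod u1 u2 = (case u2 of Some v \<Rightarrow> u1 * v | None \<Rightarrow> - \<bar>u1\<bar>)"

text \<open>sign(u) = 1 if u >= 0, -1 otherwise (note: differs from sgn at 0).\<close>
definition sign :: "real \<Rightarrow> real" where
  "sign u = (if u \<ge> 0 then 1 else -1)"

end

theory Submission
  imports Defs
begin

text \<open>Pointwise, \<open>y \<diamondsuit> b(x) \<le> (y - f\<^sub>1 x) \<diamondsuit> b(x) + (f\<^sub>1 x - y) sign(f\<^sub>1 x) + y sign(f\<^sub>1 x)\<close>,
  because the right-hand side is \<open>(y - f\<^sub>1 x) \<diamondsuit> b(x) + \<bar>f\<^sub>1 x\<bar>\<close> and the generalized product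
  is 1-Lipschitz in its first argument; integrating gives the claim.\<close>

lemma abs_eq_mult_sign: "\<bar>u\<bar> = u * sign u"
  by (simp add: sign_def)

lemma gprod_le_gprod_add_abs_diff:
  assumes "\<And>r. v = Some r \<Longrightarrow> \<bar>r\<bar> \<le> 1"
  shows "gprod u v \<le> gprod w v + \<bar>u - w\<bar>"
proof (cases v)
  case None
  then show ?thesis by (simp add: gprod_def)
next
  case (Some r)
  have "(u - w) * r \<le> \<bar>(u - w) * r\<bar>" by (rule abs_ge_self)
  also have "\<dots> \<le> \<bar>u - w\<bar>"
    using assms[OF Some] by (simp add: abs_mult mult_left_le)
  finally show ?thesis
    using Some by (simp add: gprod_def algebra_simps)
qed

lemma integral_le_sum3_integrals:
  fixes f g h k :: "'a \<Rightarrow> real"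
  assumes "integrable M f" "integrable M g" "integrable M h" "integrable M k"
    and "\<And>z. z \<in> space M \<Longrightarrow> k z \<le> f z + g z + h z"
  shows "integral\<^sup>L M k \<le> integral\<^sup>L M f + integral\<^sup>L M g + integral\<^sup>L M h"
proof -
  have "integral\<^sup>L M k \<le> integral\<^sup>L M (\<lambda>z. f z + g z + h z)"
    using assms by (intro integral_mono) auto
  also have "\<dots> = integral\<^sup>L M f + integral\<^sup>L M g + integral\<^sup>L M h"
    using assms by simp
  finally show ?thesis .
qed

theorem lemma6p3:
  fixes \<mu> :: "('x \<times> real) pmf"
    and f1 :: "'x \<Rightarrow> real"
    and b :: "'x \<Rightarrow> real option"
    and \<alpha> \<epsilon> :: real
  assumes b_range: "\<And>x r. b x = Some r \<Longrightarrow> -1 \<le> r \<and> r \<le> 1"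
    and int1: "integrable (measure_pmf \<mu>) (\<lambda>(x, y). gprod (y - f1 x) (b x))"
    and int2: "integrable (measure_pmf \<mu>) (\<lambda>(x, y). (f1 x - y) * sign (f1 x))"
    and int3: "integrable (measure_pmf \<mu>) (\<lambda>(x, y). y * sign (f1 x))"
    and int4: "integrable (measure_pmf \<mu>) (\<lambda>(x, y). gprod y (b x))"
    and h1: "measure_pmf.expectation \<mu> (\<lambda>(x, y). gprod (y - f1 x) (b x)) \<le> \<alpha>"
    and h2: "measure_pmf.expectation \<mu> (\<lambda>(x, y). (f1 x - y) * sign (f1 x)) \<le> \<epsilon>"
  shows "measure_pmf.expectation \<mu> (\<lambda>(x, y). y * sign (f1 x))
           \<ge> measure_pmf.expectation \<mu> (\<lambda>(x, y). gprod y (b x)) - \<alpha> - \<epsilon>"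
proof -
  have pointwise: "gprod y (b x) \<le> gprod (y - f1 x) (b x) + (f1 x - y) * sign (f1 x) + y * sign (f1 x)"
    for x y
  proof -
    have "gprod y (b x) \<le> gprod (y - f1 x) (b x) + \<bar>f1 x\<bar>"
      using gprod_le_gprod_add_abs_diff[of "b x" y "y - f1 x"] b_range[of x] by fastforce
    then show ?thesis
      by (simp add: abs_eq_mult_sign[of "f1 x"] algebra_simps)
  qed
  have "measure_pmf.expectation \<mu> (\<lambda>(x, y). gprod y (b x))
      \<le> measure_pmf.expectation \<mu> (\<lambda>(x, y). gprod (y - f1 x) (b x))
        + measure_pmf.expectation \<mu> (\<lambda>(x, y). (f1 x - y) * sign (f1 x))
        + measure_pmf.expectation \<mu> (\<lambda>(x, y). y * sign (f1 x))"
    using pointwise by (intro integral_le_sum3_integrals[OF int1 int2 int3 int4]) auto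
  with h1 h2 show ?thesis by linarith
qed

end
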